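(* Let $\Omega\subset G$ be a regular elliptic conjugacy class and $x\in X$ with $d(x)>d(\Omega)$. Then $I_\Omega(\mu)=0$ for every $\mu\in\mathcal H'_x$.
   Context: $F$ non-archimedean local field with ring of integers $\mathcal O$, maximal ideal $\mathcal P$; $G=\mathrm{PGL}(2,F)$ with Haar measure $dg$, $K$ the image of $\mathrm{GL}(2,\mathcal O)$. $X$: smooth characters of $\mathcal O^\times$; $U_0=\mathcal O^\times$, $U_r=1+\mathcal P^r$; $d(x)$ least $r\ge0$ with $x^2|_{U_r}=1$. For $d\ge1$, $\Gamma_d$ is the image of $\{g\in\mathrm{GL}(2,\mathcal O):g_{21}\in\mathcal P^d\}$, $\Gamma_0=K$; $\tilde x(\gamma)=x(\tilde\gamma_{11}^2/\det\tilde\gamma)$ is a character of $\Gamma_{d(x)}$ when $d(x)>0$. $\mathcal H'_x$: measures $\varphi\,dg$ ($\varphi$ locally constant, compactly supported) with $\varphi(\gamma g)=\varphi(g\gamma)=\tilde x(\gamma)\varphi(g)$ for $\gamma\in\Gamma_{d(x)}$. For a regular elliptic conjugacy class $\Omega$ and $h\in\Omega$, $I_\Omega(\varphi\,dg)=\int_G\varphi(ghg^{-1})\,dg$, and $d(\Omega)$ is the largest $d\ge0$ with $\Omega\cap\Gamma_d\neq\emptyset$. *)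

theory Defs
  imports "HOL-Analysis.Analysis" "HOL-Computational_Algebra.Polynomial"
begin

text \<open>The field F is a type 'f of class field; v is its normalized discrete
valuation (only its values at nonzero elements matter).\<close>

definition Pideal :: "('f::field \<Rightarrow> int) \<Rightarrow> int \<Rightarrow> 'f set" where
  "Pideal v n = {a. a = 0 \<or> n \<le> v a}"

abbreviation Oring :: "('f::field \<Rightarrow> int) \<Rightarrow> 'f set" where
  "Oring v \<equiv> Pideal v 0"

definition Ounits :: "('f::field \<Rightarrow> int) \<Rightarrow> 'f set" where
  "Ounits v = {a. a \<noteq> 0 \<and> v a = 0}"

definition nonarch_local_field :: "('f::field \<Rightarrow> int) \<Rightarrow> bool" where
  "nonarch_local_field v \<longleftrightarrow>
     (\<forall>a b. a \<noteq> 0 \<longrightarrow> b \<noteq> 0 \<longrightarrow> v (a * b) = v a + v b) \<and>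
     (\<forall>a b. a \<noteq> 0 \<longrightarrow> b \<noteq> 0 \<longrightarrow> a + b \<noteq> 0 \<longrightarrow> min (v a) (v b) \<le> v (a + b)) \<and>
     (\<exists>\<pi>. \<pi> \<noteq> 0 \<and> v \<pi> = 1) \<and>
     (\<exists>S. finite S \<and> S \<subseteq> Oring v \<and> (\<forall>a\<in>Oring v. \<exists>s\<in>S. a - s \<in> Pideal v 1)) \<and>
     (\<forall>s :: nat \<Rightarrow> 'f.
        (\<forall>N. \<exists>M. \<forall>m\<ge>M. \<forall>n\<ge>M. s m - s n \<in> Pideal v N) \<longrightarrow>
        (\<exists>L. \<forall>N. \<exists>M. \<forall>n\<ge>M. s n - L \<in> Pideal v N))"

definition val_topology :: "('f::field \<Rightarrow> int) \<Rightarrow> 'f topology" where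
  "val_topology v = topology (\<lambda>S. \<forall>a\<in>S. \<exists>N. {b. b - a \<in> Pideal v N} \<subseteq> S)"

lemma Pideal_mono: "N \<le> M \<Longrightarrow> Pideal v M \<subseteq> Pideal v N"
  unfolding Pideal_def by auto

lemma istopology_val: "istopology (\<lambda>S. \<forall>a\<in>S. \<exists>N. {b. b - a \<in> Pideal v N} \<subseteq> S)"
  unfolding istopology_def
proof (rule conjI; intro allI impI)
  fix S T :: "'a set"
  assume S: "\<forall>a\<in>S. \<exists>N. {b. b - a \<in> Pideal v N} \<subseteq> S"
     and T: "\<forall>a\<in>T. \<exists>N. {b. b - a \<in> Pideal v N} \<subseteq> T"
  show "\<forall>a\<in>S \<inter> T. \<exists>N. {b. b - a \<in> Pideal v N} \<subseteq> S \<inter> T"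
  proof
    fix a assume a: "a \<in> S \<inter> T"
    obtain N1 where 1: "{b. b - a \<in> Pideal v N1} \<subseteq> S"
      using S a by blast
    obtain N2 where 2: "{b. b - a \<in> Pideal v N2} \<subseteq> T"
      using T a by blast
    have m1: "Pideal v (max N1 N2) \<subseteq> Pideal v N1" by (rule Pideal_mono) simp
    have m2: "Pideal v (max N1 N2) \<subseteq> Pideal v N2" by (rule Pideal_mono) simp
    have "{b. b - a \<in> Pideal v (max N1 N2)} \<subseteq> S \<inter> T"
      using 1 2 m1 m2 by blast
    then show "\<exists>N. {b. b - a \<in> Pideal v N} \<subseteq> S \<inter> T" by (rule exI)
  qed
next
  fix K :: "'a set set"
  assume K: "\<forall>S\<in>K. \<forall>a\<in>S. \<exists>N. {b. b - a \<in> Pideal v N} \<subseteq> S"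
  show "\<forall>a\<in>\<Union>K. \<exists>N. {b. b - a \<in> Pideal v N} \<subseteq> \<Union>K"
  proof
    fix a assume "a \<in> \<Union>K"
    then obtain S where S: "S \<in> K" "a \<in> S" by blast
    then obtain N where "{b. b - a \<in> Pideal v N} \<subseteq> S" using K by blast
    then have "{b. b - a \<in> Pideal v N} \<subseteq> \<Union>K" using S by blast
    then show "\<exists>N. {b. b - a \<in> Pideal v N} \<subseteq> \<Union>K" by (rule exI)
  qed
qed

text \<open>A matrix [[a,b],[c,d]] is represented by the tuple (a,b,c,d).\<close>

type_synonym 'f mat2 = "'f \<times> 'f \<times> 'f \<times> 'f"

fun mdet :: "'f::field mat2 \<Rightarrow> 'f" where
  "mdet (a, b, c, d) = a * d - b * c"

fun mtr :: "'f::field mat2 \<Rightarrow> 'f" where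
  "mtr (a, b, c, d) = a + d"

fun mmul :: "'f::field mat2 \<Rightarrow> 'f mat2 \<Rightarrow> 'f mat2" where
  "mmul (a, b, c, d) (a', b', c', d') =
     (a * a' + b * c', a * b' + b * d', c * a' + d * c', c * b' + d * d')"

fun madj :: "'f::field mat2 \<Rightarrow> 'f mat2" where
  "madj (a, b, c, d) = (d, - b, - c, a)"

fun msc :: "'f::field \<Rightarrow> 'f mat2 \<Rightarrow> 'f mat2" where
  "msc t (a, b, c, d) = (t * a, t * b, t * c, t * d)"

definition GL2 :: "'f::field mat2 set" where
  "GL2 = {m. mdet m \<noteq> 0}"

text \<open>Elements of G = PGL(2,F) are the classes of invertible matrices modulo
nonzero scalars.\<close>

definition cls :: "'f::field mat2 \<Rightarrow> 'f mat2 set" where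
  "cls m = {msc t m | t. t \<noteq> 0}"

definition PGL2 :: "'f::field mat2 set set" where
  "PGL2 = cls ` GL2"

definition rep :: "'f::field mat2 set \<Rightarrow> 'f mat2" where
  "rep g = (SOME m. m \<in> g)"

definition gmul :: "'f::field mat2 set \<Rightarrow> 'f mat2 set \<Rightarrow> 'f mat2 set" where
  "gmul g h = cls (mmul (rep g) (rep h))"

definition ginv :: "'f::field mat2 set \<Rightarrow> 'f mat2 set" where
  "ginv g = cls (madj (rep g))"

definition gconj :: "'f::field mat2 set \<Rightarrow> 'f mat2 set \<Rightarrow> 'f mat2 set" where
  "gconj g h = gmul (gmul g h) (ginv g)"

definition mat_topology :: "('f::field \<Rightarrow> int) \<Rightarrow> 'f mat2 topology" where
  "mat_topology v = subtopology
     (prod_topology (val_topology v) (prod_topology (val_topology v)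
        (prod_topology (val_topology v) (val_topology v)))) GL2"

definition G_topology :: "('f::field \<Rightarrow> int) \<Rightarrow> 'f mat2 set topology" where
  "G_topology v = topology (\<lambda>U. U \<subseteq> PGL2 \<and> openin (mat_topology v) {m \<in> GL2. cls m \<in> U})"

lemma istopology_G: "istopology (\<lambda>U. U \<subseteq> PGL2 \<and> openin (mat_topology v) {m \<in> GL2. cls m \<in> U})"
  unfolding istopology_def
proof (rule conjI; intro allI impI)
  fix S T
  assume S: "S \<subseteq> PGL2 \<and> openin (mat_topology v) {m \<in> GL2. cls m \<in> S}"
    and T: "T \<subseteq> PGL2 \<and> openin (mat_topology v) {m \<in> GL2. cls m \<in> T}"
  have "{m \<in> GL2. cls m \<in> S \<inter> T} = {m \<in> GL2. cls m \<in> S} \<inter> {m \<in> GL2. cls m \<in> T}" by blast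
  then show "S \<inter> T \<subseteq> PGL2 \<and> openin (mat_topology v) {m \<in> GL2. cls m \<in> S \<inter> T}"
    using S T by auto
next
  fix K
  assume K: "\<forall>U\<in>K. U \<subseteq> PGL2 \<and> openin (mat_topology v) {m \<in> GL2. cls m \<in> U}"
  have "{m \<in> GL2. cls m \<in> \<Union>K} = (\<Union>U\<in>K. {m \<in> GL2. cls m \<in> U})" by blast
  moreover have "openin (mat_topology v) (\<Union>U\<in>K. {m \<in> GL2. cls m \<in> U})"
    using K by (intro openin_Union) auto
  ultimately show "\<Union>K \<subseteq> PGL2 \<and> openin (mat_topology v) {m \<in> GL2. cls m \<in> \<Union>K}"
    using K by auto
qed

definition haar_measure :: "('f::field \<Rightarrow> int) \<Rightarrow> 'f mat2 set measure \<Rightarrow> bool" where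
  "haar_measure v M \<longleftrightarrow>
     space M = PGL2 \<and>
     sets M = sigma_sets PGL2 {U. openin (G_topology v) U} \<and>
     (\<forall>g\<in>PGL2. \<forall>A\<in>sets M. emeasure M (gmul g ` A) = emeasure M A) \<and>
     (\<forall>C. compactin (G_topology v) C \<longrightarrow> emeasure M C < \<infinity>) \<and>
     (\<forall>U. openin (G_topology v) U \<longrightarrow> U \<noteq> {} \<longrightarrow> emeasure M U > 0)"

definition Ugrp :: "('f::field \<Rightarrow> int) \<Rightarrow> nat \<Rightarrow> 'f set" where
  "Ugrp v r = {a \<in> Ounits v. a - 1 \<in> Pideal v (int r)}"

text \<open>Smooth characters of O^x (values only on O^x matter).\<close>

definition smooth_char :: "('f::field \<Rightarrow> int) \<Rightarrow> ('f \<Rightarrow> complex) \<Rightarrow> bool" where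
  "smooth_char v x \<longleftrightarrow>
     (\<forall>a\<in>Ounits v. \<forall>b\<in>Ounits v. x (a * b) = x a * x b) \<and>
     (\<forall>a\<in>Ounits v. x a \<noteq> 0) \<and>
     (\<exists>r. \<forall>u\<in>Ugrp v r. x u = 1)"

definition dchar :: "('f::field \<Rightarrow> int) \<Rightarrow> ('f \<Rightarrow> complex) \<Rightarrow> nat" where
  "dchar v x = (LEAST r. \<forall>u\<in>Ugrp v r. (x u)\<^sup>2 = 1)"

definition Gamma_lift :: "('f::field \<Rightarrow> int) \<Rightarrow> nat \<Rightarrow> 'f mat2 set" where
  "Gamma_lift v d = {(a, b, c, e). a \<in> Oring v \<and> b \<in> Oring v \<and> c \<in> Pideal v (int d) \<and>
      e \<in> Oring v \<and> mdet (a, b, c, e) \<in> Ounits v}"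

definition Gamma :: "('f::field \<Rightarrow> int) \<Rightarrow> nat \<Rightarrow> 'f mat2 set set" where
  "Gamma v d = cls ` Gamma_lift v d"

definition xtilde :: "('f::field \<Rightarrow> int) \<Rightarrow> ('f \<Rightarrow> complex) \<Rightarrow> nat \<Rightarrow> 'f mat2 set \<Rightarrow> complex" where
  "xtilde v x d \<gamma> =
     (let m = (SOME m. m \<in> \<gamma> \<and> m \<in> Gamma_lift v d) in x ((fst m)\<^sup>2 / mdet m))"

definition locally_constant_on_G :: "('f::field \<Rightarrow> int) \<Rightarrow> ('f mat2 set \<Rightarrow> complex) \<Rightarrow> bool" where
  "locally_constant_on_G v \<phi> \<longleftrightarrow>
     (\<forall>g\<in>PGL2. \<exists>U. openin (G_topology v) U \<and> g \<in> U \<and> (\<forall>g'\<in>U. \<phi> g' = \<phi> g))"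

definition compact_support_on_G :: "('f::field \<Rightarrow> int) \<Rightarrow> ('f mat2 set \<Rightarrow> complex) \<Rightarrow> bool" where
  "compact_support_on_G v \<phi> \<longleftrightarrow>
     (\<exists>C. compactin (G_topology v) C \<and> (\<forall>g\<in>PGL2. g \<notin> C \<longrightarrow> \<phi> g = 0))"

text \<open>Densities phi of the measures phi dg in H'_x.\<close>

definition Hprime :: "('f::field \<Rightarrow> int) \<Rightarrow> ('f \<Rightarrow> complex) \<Rightarrow> ('f mat2 set \<Rightarrow> complex) set" where
  "Hprime v x = {\<phi>. locally_constant_on_G v \<phi> \<and> compact_support_on_G v \<phi> \<and>
      (\<forall>\<gamma>\<in>Gamma v (dchar v x). \<forall>g\<in>PGL2.
          \<phi> (gmul \<gamma> g) = xtilde v x (dchar v x) \<gamma> * \<phi> g \<and>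
          \<phi> (gmul g \<gamma>) = xtilde v x (dchar v x) \<gamma> * \<phi> g)}"

definition regular_elliptic :: "'f::field mat2 set \<Rightarrow> bool" where
  "regular_elliptic h \<longleftrightarrow> h \<in> PGL2 \<and>
     irreducible [:mdet (rep h), - mtr (rep h), 1:] \<and>
     (mtr (rep h))\<^sup>2 \<noteq> 4 * mdet (rep h)"

definition conj_class :: "'f::field mat2 set \<Rightarrow> 'f mat2 set set" where
  "conj_class h = {gconj g h | g. g \<in> PGL2}"

definition regular_elliptic_class :: "'f::field mat2 set set \<Rightarrow> bool" where
  "regular_elliptic_class \<Omega> \<longleftrightarrow> (\<exists>h. regular_elliptic h \<and> \<Omega> = conj_class h)"

definition dclass :: "('f::field \<Rightarrow> int) \<Rightarrow> 'f mat2 set set \<Rightarrow> nat" where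
  "dclass v \<Omega> = (GREATEST d. \<Omega> \<inter> Gamma v d \<noteq> {})"

definition orbital_integral ::
  "'f::field mat2 set measure \<Rightarrow> 'f mat2 set \<Rightarrow> ('f mat2 set \<Rightarrow> complex) \<Rightarrow> complex" where
  "orbital_integral M h \<phi> = integral\<^sup>L M (\<lambda>g. \<phi> (gconj g h))"

end

theory Submission
  imports Defs
begin

text \<open>A density \<phi> in H'_x transforms on both sides under the level-d(x) group through the character
  xtilde. Pick u = 1 + z in U_(d(x)-1) with x(u)^2 \<noteq> 1. Every matrix outside the double cosets
  \<Gamma> diag(a, e) \<Gamma> is intertwined by a pair of elements of \<Gamma> with different xtilde-values (up to
  unipotent reductions, four explicit configurations suffice), so \<phi> vanishes there.

  A conjugate of a regular elliptic element lying in such a double coset is conjugate to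
  \<gamma> diag(a, e). Rescaling, either it lies in \<Gamma>_d(x), impossible because d(x) > d(\<Omega>), or its
  characteristic polynomial has unit trace and non-unit determinant, so Hensel's lemma gives it a
  root in F, impossible for an elliptic element. Thus \<phi> vanishes on \<Omega> and so does the orbital
  integral. Hensel's lemma also shows that d(\<Omega>) is finite: a conjugate lying in \<Gamma>_d for d beyond
  the valuation of the normalized discriminant would have an eigenvalue in F.\<close>

locale local_field =
  fixes v :: "'f::field \<Rightarrow> int"
  assumes nonarch_local_field: "nonarch_local_field v"
begin

lemma val_mult: "a \<noteq> 0 \<Longrightarrow> b \<noteq> 0 \<Longrightarrow> v (a * b) = v a + v b"
  using nonarch_local_field unfolding nonarch_local_field_def by blast

lemma val_ultrametric:
  "a \<noteq> 0 \<Longrightarrow> b \<noteq> 0 \<Longrightarrow> a + b \<noteq> 0 \<Longrightarrow> min (v a) (v b) \<le> v (a + b)"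
  using nonarch_local_field unfolding nonarch_local_field_def by blast

lemma Pideal_Cauchy_convergent:
  fixes s :: "nat \<Rightarrow> 'f"
  assumes "\<forall>N. \<exists>M. \<forall>m\<ge>M. \<forall>n\<ge>M. s m - s n \<in> Pideal v N"
  shows "\<exists>L. \<forall>N. \<exists>M. \<forall>n\<ge>M. s n - L \<in> Pideal v N"
proof -
  have "\<forall>s :: nat \<Rightarrow> 'f. (\<forall>N. \<exists>M. \<forall>m\<ge>M. \<forall>n\<ge>M. s m - s n \<in> Pideal v N) \<longrightarrow>
        (\<exists>L. \<forall>N. \<exists>M. \<forall>n\<ge>M. s n - L \<in> Pideal v N)"
    using nonarch_local_field unfolding nonarch_local_field_def by (elim conjE)
  then show ?thesis
    using assms by blast
qed

lemma val_one [simp]: "v 1 = 0"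
  using val_mult[of 1 1] by simp

lemma val_inverse: "a \<noteq> 0 \<Longrightarrow> v (inverse a) = - v a"
  using val_mult[of a "inverse a"] by simp

lemma val_uminus [simp]: "v (- a) = v a"
proof (cases "a = 0")
  case False
  have "v (- 1) = 0"
    using val_mult[of "- 1" "- 1"] by simp
  then show ?thesis
    using val_mult[of "- 1" a] False by simp
qed simp

lemma val_power2: "a \<noteq> 0 \<Longrightarrow> v (a\<^sup>2) = 2 * v a"
  using val_mult[of a a] by (simp add: power2_eq_square)

lemma Pideal_zero [simp]: "0 \<in> Pideal v n"
  by (simp add: Pideal_def)

lemma Pideal_val: "a \<noteq> 0 \<Longrightarrow> a \<in> Pideal v (v a)"
  by (simp add: Pideal_def)

lemma Pideal_uminus_iff [simp]: "- a \<in> Pideal v n \<longleftrightarrow> a \<in> Pideal v n"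
  by (simp add: Pideal_def)

lemma Pideal_monoD: "a \<in> Pideal v m \<Longrightarrow> n \<le> m \<Longrightarrow> a \<in> Pideal v n"
  using Pideal_mono by blast

lemma Pideal_add:
  assumes a: "a \<in> Pideal v n" and b: "b \<in> Pideal v n"
  shows "a + b \<in> Pideal v n"
proof (cases "a = 0 \<or> b = 0 \<or> a + b = 0")
  case False
  then have "min (v a) (v b) \<le> v (a + b)"
    using val_ultrametric by blast
  then show ?thesis
    using a b False by (auto simp: Pideal_def)
qed (use a b in auto)

lemma Pideal_diff: "a \<in> Pideal v n \<Longrightarrow> b \<in> Pideal v n \<Longrightarrow> a - b \<in> Pideal v n"
  using Pideal_add[of a n "- b"] by simp

lemma Pideal_mult: "a \<in> Pideal v m \<Longrightarrow> b \<in> Pideal v n \<Longrightarrow> a * b \<in> Pideal v (m + n)"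
  by (cases "a = 0 \<or> b = 0") (auto simp: Pideal_def val_mult)

lemma Oring_mult_Pideal: "a \<in> Oring v \<Longrightarrow> b \<in> Pideal v n \<Longrightarrow> a * b \<in> Pideal v n"
  using Pideal_mult[of a 0 b n] by simp

lemma Pideal_mult_Oring: "a \<in> Pideal v n \<Longrightarrow> b \<in> Oring v \<Longrightarrow> a * b \<in> Pideal v n"
  using Pideal_mult[of a n b 0] by simp

lemma one_in_Oring [simp]: "1 \<in> Oring v"
  by (simp add: Pideal_def)

lemma numeral_in_Oring [simp]: "numeral k \<in> Oring v"
proof (induction k)
  case (Bit0 k)
  then show ?case
    using Pideal_add[of "numeral k" 0 "numeral k"] by (simp add: numeral_Bit0)
next
  case (Bit1 k)
  then show ?case
    using Pideal_add[of "numeral k + numeral k" 0 1] Pideal_add[of "numeral k" 0 "numeral k"]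
    by (simp add: numeral_Bit1)
qed simp

lemma divide_in_Pideal_swap:
  "a \<noteq> 0 \<Longrightarrow> b \<noteq> 0 \<Longrightarrow> a / b \<notin> Pideal v n \<Longrightarrow> b / a \<in> Pideal v (1 - n)"
  using val_inverse[of "a / b"] by (auto simp: Pideal_def)

lemma divide_notin_Oring_swap: "a \<noteq> 0 \<Longrightarrow> b \<noteq> 0 \<Longrightarrow> a / b \<notin> Oring v \<Longrightarrow> b / a \<in> Pideal v 1"
  using divide_in_Pideal_swap[of a b 0] by simp

lemma divide_notin_Pideal1_swap: "a \<noteq> 0 \<Longrightarrow> b \<noteq> 0 \<Longrightarrow> a / b \<notin> Pideal v 1 \<Longrightarrow> b / a \<in> Oring v"
  using divide_in_Pideal_swap[of a b 1] by simp

lemma val_add_eq_left: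
  assumes a: "a \<noteq> 0" "v a < n" and b: "b \<in> Pideal v n"
  shows "a + b \<noteq> 0 \<and> v (a + b) = v a"
proof (cases "b = 0")
  case False
  then have vb: "n \<le> v b"
    using b by (simp add: Pideal_def)
  have ne: "a + b \<noteq> 0"
  proof
    assume "a + b = 0"
    then have "b = - a"
      by (simp add: add_eq_0_iff)
    then show False
      using vb a by simp
  qed
  have "min (v a) (v b) \<le> v (a + b)"
    using val_ultrametric a ne False by blast
  moreover have "min (v (a + b)) (v (- b)) \<le> v (a + b + - b)"
    using val_ultrametric[of "a + b" "- b"] ne False a by simp
  ultimately show ?thesis
    using ne vb a by auto
qed (use a in simp)

lemma Pideal_Inter_eq_zero: "(\<And>N. a \<in> Pideal v N) \<Longrightarrow> a = 0"
  by (auto simp: Pideal_def) (metis add1_zle_eq less_add_one not_less)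

lemma one_in_Ounits [simp]: "1 \<in> Ounits v"
  by (simp add: Ounits_def)

lemma Ounits_Oring: "u \<in> Ounits v \<Longrightarrow> u \<in> Oring v"
  by (simp add: Ounits_def Pideal_def)

lemma Ounits_nonzero: "u \<in> Ounits v \<Longrightarrow> u \<noteq> 0"
  by (simp add: Ounits_def)

lemma Ounits_inverse: "u \<in> Ounits v \<Longrightarrow> inverse u \<in> Ounits v"
  by (auto simp: Ounits_def val_inverse)

lemma Ounits_mult: "u \<in> Ounits v \<Longrightarrow> w \<in> Ounits v \<Longrightarrow> u * w \<in> Ounits v"
  by (auto simp: Ounits_def val_mult)

lemma Ounits_divide: "u \<in> Ounits v \<Longrightarrow> w \<in> Ounits v \<Longrightarrow> u / w \<in> Ounits v"
  by (simp add: divide_inverse Ounits_mult Ounits_inverse)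

lemma Ounits_add_Pideal: "u \<in> Ounits v \<Longrightarrow> a \<in> Pideal v 1 \<Longrightarrow> u + a \<in> Ounits v"
  using val_add_eq_left[of u 1 a] by (simp add: Ounits_def)

section \<open>Hensel's lemma for quadratics\<close>

lemma Pideal_limit_of_steps:
  fixes s :: "nat \<Rightarrow> 'f"
  assumes step: "\<And>n. s (Suc n) - s n \<in> Pideal v (k + int n)"
  shows "\<exists>L. \<forall>N. \<exists>M. \<forall>n\<ge>M. s n - L \<in> Pideal v N"
proof (rule Pideal_Cauchy_convergent, intro allI)
  have tail: "s j - s n \<in> Pideal v (k + int n)" if "n \<le> j" for n j
    using that
  proof (induction j)
    case (Suc j)
    show ?case
    proof (cases "n = Suc j")
      case False
      then have "s (Suc j) - s j \<in> Pideal v (k + int n)" "s j - s n \<in> Pideal v (k + int n)"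
        using Suc Pideal_monoD[OF step[of j]] by auto
      from Pideal_add[OF this] show ?thesis
        by simp
    qed simp
  qed simp
  fix N
  define M where "M = nat (\<bar>N\<bar> + \<bar>k\<bar>)"
  have "s i - s j \<in> Pideal v N" if "M \<le> i" "M \<le> j" for i j
  proof -
    have "s i - s M \<in> Pideal v (k + int M)" "s j - s M \<in> Pideal v (k + int M)"
      using tail that by auto
    from Pideal_diff[OF this] have "s i - s j \<in> Pideal v (k + int M)"
      by simp
    then show ?thesis
      by (rule Pideal_monoD) (simp add: M_def)
  qed
  then show "\<exists>M. \<forall>i\<ge>M. \<forall>j\<ge>M. s i - s j \<in> Pideal v N"
    by blast
qed

lemma quadratic_Newton_step:
  assumes nz: "2 * a - T \<noteq> 0" and m: "v (2 * a - T) = m"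
    and fa: "a\<^sup>2 - T * a + C \<in> Pideal v (2 * m + 1 + int n)"
  defines "a' \<equiv> a - (a\<^sup>2 - T * a + C) / (2 * a - T)"
  shows "a' - a \<in> Pideal v (m + 1 + int n)"
    and "2 * a' - T \<noteq> 0 \<and> v (2 * a' - T) = m"
    and "a'\<^sup>2 - T * a' + C \<in> Pideal v (2 * m + 1 + int (Suc n))"
proof -
  define h where "h = a' - a"
  have "inverse (2 * a - T) \<in> Pideal v (- m)"
    using nz m by (simp add: Pideal_def val_inverse)
  from Pideal_mult[OF fa this]
  have "(a\<^sup>2 - T * a + C) * inverse (2 * a - T) \<in> Pideal v (m + 1 + int n)"
    by (simp add: algebra_simps)
  then show hP: "a' - a \<in> Pideal v (m + 1 + int n)"
    by (simp add: a'_def divide_inverse)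
  have "2 * h \<in> Pideal v (m + 1 + int n)"
    using Oring_mult_Pideal[of 2 h] hP by (simp add: h_def)
  then have "2 * h \<in> Pideal v (m + 1)"
    by (rule Pideal_monoD) simp
  then have "2 * a - T + 2 * h \<noteq> 0 \<and> v (2 * a - T + 2 * h) = m"
    using val_add_eq_left[of "2 * a - T" "m + 1" "2 * h"] nz m by simp
  then show "2 * a' - T \<noteq> 0 \<and> v (2 * a' - T) = m"
    by (simp add: h_def algebra_simps)
  have "(2 * a - T) * h = - (a\<^sup>2 - T * a + C)"
    using nz by (simp add: h_def a'_def)
  then have "a'\<^sup>2 - T * a' + C = h * h"
    by (simp add: h_def algebra_simps power2_eq_square)
  moreover have "h * h \<in> Pideal v ((m + 1 + int n) + (m + 1 + int n))"
    using Pideal_mult hP h_def by blast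
  ultimately show "a'\<^sup>2 - T * a' + C \<in> Pideal v (2 * m + 1 + int (Suc n))"
    by (auto elim: Pideal_monoD)
qed

lemma quadratic_root_of_limit:
  fixes s :: "nat \<Rightarrow> 'f"
  assumes L: "\<forall>N. \<exists>M. \<forall>n\<ge>M. s n - L \<in> Pideal v N"
    and approx: "\<And>n. (s n)\<^sup>2 - T * s n + C \<in> Pideal v (k + int n)"
    and deriv: "\<And>n. 2 * s n - T \<in> Pideal v m"
  shows "L\<^sup>2 - T * L + C = 0"
proof (rule Pideal_Inter_eq_zero)
  fix N
  define N' where "N' = \<bar>N\<bar> + \<bar>m\<bar> + 1"
  obtain M where M: "\<forall>n\<ge>M. s n - L \<in> Pideal v N'"
    using L by blast
  define n where "n = max M (nat (\<bar>N\<bar> + \<bar>k\<bar>))"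
  define \<delta> where "\<delta> = L - s n"
  have \<delta>: "\<delta> \<in> Pideal v N'"
    using M Pideal_uminus_iff[of "s n - L"] by (simp add: n_def \<delta>_def)
  have Taylor: "L\<^sup>2 - T * L + C = ((s n)\<^sup>2 - T * s n + C) + (2 * s n - T) * \<delta> + \<delta> * \<delta>"
    by (simp add: \<delta>_def algebra_simps power2_eq_square)
  have "(s n)\<^sup>2 - T * s n + C \<in> Pideal v N"
    using approx[of n] by (rule Pideal_monoD) (simp add: n_def)
  moreover have "(2 * s n - T) * \<delta> \<in> Pideal v N"
    using Pideal_mult[OF deriv \<delta>] by (rule Pideal_monoD) (simp add: N'_def)
  moreover have "\<delta> * \<delta> \<in> Pideal v N"
    using Pideal_mult[OF \<delta> \<delta>] by (rule Pideal_monoD) (simp add: N'_def)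
  ultimately show "L\<^sup>2 - T * L + C \<in> Pideal v N"
    unfolding Taylor by (blast intro: Pideal_add)
qed

lemma quadratic_Hensel:
  assumes nz: "2 * a - T \<noteq> 0" and fa: "a\<^sup>2 - T * a + C \<in> Pideal v (2 * v (2 * a - T) + 1)"
  shows "\<exists>r. r\<^sup>2 - T * r + C = 0"
proof -
  define m where "m = v (2 * a - T)"
  define f where "f X = X\<^sup>2 - T * X + C" for X
  define s where "s k = ((\<lambda>X. X - f X / (2 * X - T)) ^^ k) a" for k
  have s_Suc: "s (Suc k) = s k - f (s k) / (2 * s k - T)" for k
    by (simp add: s_def)
  have inv: "2 * s k - T \<noteq> 0 \<and> v (2 * s k - T) = m \<and> f (s k) \<in> Pideal v (2 * m + 1 + int k)" for k
  proof (induction k)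
    case 0
    show ?case
      using nz fa by (simp add: s_def f_def m_def)
  next
    case (Suc k)
    then show ?case
      using quadratic_Newton_step(2,3)[of "s k" T m C k] by (simp add: s_Suc f_def)
  qed
  have "s (Suc k) - s k \<in> Pideal v (m + 1 + int k)" for k
    using quadratic_Newton_step(1)[of "s k" T m C k] inv[of k] by (simp add: s_Suc f_def)
  then obtain L where L: "\<forall>N. \<exists>M. \<forall>n\<ge>M. s n - L \<in> Pideal v N"
    using Pideal_limit_of_steps by blast
  have "(s n)\<^sup>2 - T * s n + C \<in> Pideal v (2 * m + 1 + int n)" for n
    using inv[of n] by (simp add: f_def)
  moreover have "2 * s n - T \<in> Pideal v m" for n
    using Pideal_val inv[of n] by metis
  ultimately have "L\<^sup>2 - T * L + C = 0"
    by (rule quadratic_root_of_limit[OF L])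
  then show ?thesis
    by blast
qed

lemma quadratic_root_of_unit_trace:
  assumes "T \<in> Ounits v" and "C \<in> Pideal v 1"
  shows "\<exists>r. r\<^sup>2 - T * r + C = 0"
  using quadratic_Hensel[of 0 T C] assms by (simp add: Ounits_def)

end

lemma msc_msc [simp]: "msc s (msc t A) = msc (s * t) A"
  by (cases A rule: prod_cases4) (simp add: algebra_simps)

lemma msc_1 [simp]: "msc 1 A = A"
  by (cases A rule: prod_cases4) simp

lemma mmul_msc_left [simp]: "mmul (msc t A) B = msc t (mmul A B)"
  by (cases A rule: prod_cases4, cases B rule: prod_cases4) (simp add: algebra_simps)

lemma mmul_msc_right [simp]: "mmul A (msc t B) = msc t (mmul A B)"
  by (cases A rule: prod_cases4, cases B rule: prod_cases4) (simp add: algebra_simps)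

lemma madj_msc [simp]: "madj (msc t A) = msc t (madj A)"
  by (cases A rule: prod_cases4) simp

lemma mdet_msc [simp]: "mdet (msc t A) = t\<^sup>2 * mdet A"
  by (cases A rule: prod_cases4) (simp add: algebra_simps power2_eq_square)

lemma mtr_msc [simp]: "mtr (msc t A) = t * mtr A"
  by (cases A rule: prod_cases4) (simp add: algebra_simps)

lemma mdet_mmul [simp]: "mdet (mmul A B) = mdet A * mdet B"
  by (cases A rule: prod_cases4, cases B rule: prod_cases4) (simp add: algebra_simps)

lemma mmul_id_left [simp]: "mmul (1, 0, 0, 1) A = A"
  by (cases A rule: prod_cases4) simp

lemma mmul_id_right [simp]: "mmul A (1, 0, 0, 1) = A"
  by (cases A rule: prod_cases4) simp

lemma mmul_assoc: "mmul (mmul A B) C = mmul A (mmul B C)"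
  by (cases A rule: prod_cases4, cases B rule: prod_cases4, cases C rule: prod_cases4)
    (simp add: algebra_simps)

lemma madj_mmul: "madj (mmul A B) = mmul (madj B) (madj A)"
  by (cases A rule: prod_cases4, cases B rule: prod_cases4) (simp add: algebra_simps)

lemma mmul_madj: "mmul A (madj A) = msc (mdet A) (1, 0, 0, 1)"
  by (cases A rule: prod_cases4) (simp add: algebra_simps)

lemma mdet_madj [simp]: "mdet (madj A) = mdet A"
  by (cases A rule: prod_cases4) (simp add: algebra_simps)

lemma mtr_conj: "mtr (mmul (mmul A B) (madj A)) = mdet A * mtr B"
  by (cases A rule: prod_cases4, cases B rule: prod_cases4) (simp add: algebra_simps)

lemma in_cls_iff: "B \<in> cls A \<longleftrightarrow> (\<exists>t. t \<noteq> 0 \<and> B = msc t A)"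
  unfolding cls_def by blast

lemma self_in_cls: "A \<in> cls A"
  unfolding in_cls_iff by (rule exI[of _ 1]) simp

lemma cls_msc:
  assumes "t \<noteq> 0"
  shows "cls (msc t A) = cls A"
proof -
  have "B \<in> cls (msc t A) \<longleftrightarrow> B \<in> cls A" for B
  proof
    assume "B \<in> cls (msc t A)"
    then obtain s where "s \<noteq> 0" "B = msc (s * t) A"
      by (auto simp: in_cls_iff)
    then show "B \<in> cls A"
      using assms unfolding in_cls_iff by (intro exI[of _ "s * t"]) simp
  next
    assume "B \<in> cls A"
    then obtain s where "s \<noteq> 0" "B = msc s A"
      by (auto simp: in_cls_iff)
    then have "B = msc (s / t) (msc t A)" "s / t \<noteq> 0"
      using assms by simp_all
    then show "B \<in> cls (msc t A)"
      unfolding in_cls_iff by blast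
  qed
  then show ?thesis
    by blast
qed

lemma cls_eqI: "B \<in> cls A \<Longrightarrow> cls B = cls A"
  by (auto simp: in_cls_iff cls_msc)

lemma rep_cls: "\<exists>t. t \<noteq> 0 \<and> rep (cls A) = msc t A"
proof -
  have "rep (cls A) \<in> cls A"
    unfolding rep_def by (rule someI, rule self_in_cls)
  then show ?thesis
    by (simp add: in_cls_iff)
qed

lemma PGL2_cases:
  assumes "g \<in> PGL2"
  obtains A where "mdet A \<noteq> 0" "g = cls A"
  using assms unfolding PGL2_def GL2_def by blast

lemma cls_in_PGL2: "mdet A \<noteq> 0 \<Longrightarrow> cls A \<in> PGL2"
  by (auto simp: PGL2_def GL2_def)

lemma cls_rep:
  assumes "g \<in> PGL2"
  shows "cls (rep g) = g"
proof -
  obtain A where "g = cls A"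
    using assms by (rule PGL2_cases)
  moreover obtain t where "t \<noteq> 0" "rep (cls A) = msc t A"
    using rep_cls by blast
  ultimately show ?thesis
    by (simp add: cls_msc)
qed

lemma mdet_rep_nonzero:
  assumes "g \<in> PGL2"
  shows "mdet (rep g) \<noteq> 0"
proof -
  obtain A where "mdet A \<noteq> 0" "g = cls A"
    using assms by (rule PGL2_cases)
  moreover obtain t where "t \<noteq> 0" "rep (cls A) = msc t A"
    using rep_cls by blast
  ultimately show ?thesis
    by simp
qed

lemma gmul_cls: "gmul (cls A) (cls B) = cls (mmul A B)"
proof -
  obtain s t where "s \<noteq> 0" "rep (cls A) = msc s A" "t \<noteq> 0" "rep (cls B) = msc t B"
    using rep_cls by metis
  then show ?thesis
    by (simp add: gmul_def cls_msc)
qed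

lemma gconj_cls: "gconj (cls A) (cls B) = cls (mmul (mmul A B) (madj A))"
proof -
  obtain s where "s \<noteq> 0" "rep (cls A) = msc s A"
    using rep_cls by blast
  then have "ginv (cls A) = cls (madj A)"
    by (simp add: ginv_def cls_msc)
  then show ?thesis
    by (simp add: gconj_def gmul_cls)
qed

lemma gconj_gconj:
  assumes "g \<in> PGL2" "g' \<in> PGL2" "h \<in> PGL2"
  shows "\<exists>g''\<in>PGL2. gconj g (gconj g' h) = gconj g'' h"
proof -
  obtain A B C where AB: "mdet A \<noteq> 0" "g = cls A" "mdet B \<noteq> 0" "g' = cls B" and C: "h = cls C"
    using assms by (metis PGL2_cases)
  have "gconj g (gconj g' h) = cls (mmul (mmul (mmul A B) C) (madj (mmul A B)))"
    by (simp add: AB C gconj_cls madj_mmul mmul_assoc)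
  also have "\<dots> = gconj (cls (mmul A B)) h"
    by (simp add: C gconj_cls)
  finally show ?thesis
    using AB cls_in_PGL2[of "mmul A B"] by auto
qed

lemma gconj_in_PGL2:
  assumes "g \<in> PGL2" "h \<in> PGL2"
  shows "gconj g h \<in> PGL2"
proof -
  obtain A C where "mdet A \<noteq> 0" "g = cls A" "mdet C \<noteq> 0" "h = cls C"
    using assms by (metis PGL2_cases)
  then show ?thesis
    by (simp add: gconj_cls cls_in_PGL2)
qed

lemma conj_class_subset_PGL2: "h \<in> PGL2 \<Longrightarrow> conj_class h \<subseteq> PGL2"
  unfolding conj_class_def using gconj_in_PGL2 by blast

lemma gconj_in_conj_class:
  "h \<in> PGL2 \<Longrightarrow> y \<in> conj_class h \<Longrightarrow> g \<in> PGL2 \<Longrightarrow> gconj g y \<in> conj_class h"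
  unfolding conj_class_def using gconj_gconj by blast

lemma regular_elliptic_class_gconj:
  "regular_elliptic_class \<Omega> \<Longrightarrow> y \<in> \<Omega> \<Longrightarrow> g \<in> PGL2 \<Longrightarrow> gconj g y \<in> \<Omega>"
  unfolding regular_elliptic_class_def regular_elliptic_def using gconj_in_conj_class by blast

lemma conj_class_charpoly_scaled:
  assumes "h \<in> PGL2" "y \<in> conj_class h" "Z \<in> y"
  shows "\<exists>s. s \<noteq> 0 \<and> mtr Z = s * mtr (rep h) \<and> mdet Z = s\<^sup>2 * mdet (rep h)"
proof -
  obtain g where "g \<in> PGL2" "y = gconj g h"
    using assms(2) unfolding conj_class_def by blast
  then obtain A where A: "mdet A \<noteq> 0" "y = gconj (cls A) h"
    by (metis PGL2_cases)
  then have "y = cls (mmul (mmul A (rep h)) (madj A))"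
    using gconj_cls cls_rep assms(1) by metis
  then obtain t where t: "t \<noteq> 0" "Z = msc t (mmul (mmul A (rep h)) (madj A))"
    using assms(3) by (auto simp: in_cls_iff)
  have "mtr Z = (t * mdet A) * mtr (rep h)" "mdet Z = (t * mdet A)\<^sup>2 * mdet (rep h)"
    using t by (simp_all add: mtr_conj power2_eq_square algebra_simps)
  then show ?thesis
    using t A by (intro exI[of _ "t * mdet A"]) simp
qed

lemma irreducible_quadratic_no_root:
  fixes C T r :: "'f::field"
  assumes "irreducible [:C, - T, 1:]"
  shows "r\<^sup>2 - T * r + C \<noteq> 0"
proof
  assume "r\<^sup>2 - T * r + C = 0"
  then have "poly [:C, - T, 1:] r = 0"
    by (simp add: algebra_simps power2_eq_square)
  then obtain k where k: "[:C, - T, 1:] = [:- r, 1:] * k"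
    using poly_eq_0_iff_dvd by (blast elim: dvdE)
  have "k \<noteq> 0"
    using k by auto
  have "degree ([:- r, 1:] * k) = degree [:- r, 1:] + degree k"
    using \<open>k \<noteq> 0\<close> degree_mult_eq[of "[:- r, 1:]" k] by simp
  moreover have "degree [:C, - T, 1:] = 2"
    by simp
  ultimately have "degree k = 1"
    using k by (simp del: mult_pCons_left)
  then have "\<not> is_unit k" "\<not> is_unit [:- r, 1:]"
    using \<open>k \<noteq> 0\<close> by (simp_all add: is_unit_iff_degree)
  moreover have "is_unit [:- r, 1:] \<or> is_unit k"
    using assms k by (simp add: irreducible_def del: mult_pCons_left)
  ultimately show False
    by blast
qed

lemma conj_class_charpoly_no_root:
  assumes "regular_elliptic h" "y \<in> conj_class h" "Z \<in> y"
  shows "r\<^sup>2 - mtr Z * r + mdet Z \<noteq> 0"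
proof
  assume root: "r\<^sup>2 - mtr Z * r + mdet Z = 0"
  have h: "h \<in> PGL2" and irr: "irreducible [:mdet (rep h), - mtr (rep h), 1:]"
    using assms(1) by (auto simp: regular_elliptic_def)
  obtain s where s: "s \<noteq> 0" "mtr Z = s * mtr (rep h)" "mdet Z = s\<^sup>2 * mdet (rep h)"
    using conj_class_charpoly_scaled[OF h assms(2,3)] by blast
  have "(r / s)\<^sup>2 - mtr (rep h) * (r / s) + mdet (rep h) = (r\<^sup>2 - mtr Z * r + mdet Z) / s\<^sup>2"
    using s by (simp add: field_simps power2_eq_square)
  with root have "(r / s)\<^sup>2 - mtr (rep h) * (r / s) + mdet (rep h) = 0"
    by simp
  with irreducible_quadratic_no_root[OF irr] show False
    by blast
qed

definition mdisc :: "'f::field mat2 \<Rightarrow> 'f" where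
  "mdisc A = (mtr A)\<^sup>2 - 4 * mdet A"

lemma Gamma_lift_iff:
  "(a, b, c, e) \<in> Gamma_lift v D \<longleftrightarrow>
     a \<in> Oring v \<and> b \<in> Oring v \<and> c \<in> Pideal v (int D) \<and> e \<in> Oring v \<and> a * e - b * c \<in> Ounits v"
  by (simp add: Gamma_lift_def)

context local_field
begin

lemma upper_unipotent_in_Gamma_lift: "q \<in> Oring v \<Longrightarrow> (1, q, 0, 1) \<in> Gamma_lift v D"
  by (simp add: Gamma_lift_iff)

lemma lower_unipotent_in_Gamma_lift: "r \<in> Pideal v (int D) \<Longrightarrow> (1, 0, r, 1) \<in> Gamma_lift v D"
  by (simp add: Gamma_lift_iff)

lemma id_in_Gamma_lift: "(1, 0, 0, 1) \<in> Gamma_lift v D"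
  by (simp add: Gamma_lift_iff)

lemma Gamma_lift_mdet: "A \<in> Gamma_lift v D \<Longrightarrow> mdet A \<in> Ounits v"
  by (cases A rule: prod_cases4) (simp add: Gamma_lift_iff)

lemma Gamma_lift_mdet_nonzero: "A \<in> Gamma_lift v D \<Longrightarrow> mdet A \<noteq> 0"
  using Gamma_lift_mdet Ounits_nonzero by blast

lemma Gamma_lift_mmul:
  assumes "A \<in> Gamma_lift v D" "B \<in> Gamma_lift v D"
  shows "mmul A B \<in> Gamma_lift v D"
proof -
  obtain a b c e a' b' c' e' where AB: "A = (a, b, c, e)" "B = (a', b', c', e')"
    by (cases A rule: prod_cases4, cases B rule: prod_cases4)
  have h: "a \<in> Oring v" "b \<in> Oring v" "c \<in> Pideal v (int D)" "e \<in> Oring v"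
    "a' \<in> Oring v" "b' \<in> Oring v" "c' \<in> Pideal v (int D)" "e' \<in> Oring v"
    using assms by (auto simp: AB Gamma_lift_iff)
  have "c \<in> Oring v" "c' \<in> Oring v"
    using h Pideal_monoD by auto
  with h have "a * a' + b * c' \<in> Oring v" "a * b' + b * e' \<in> Oring v"
    "c * a' + e * c' \<in> Pideal v (int D)" "c * b' + e * e' \<in> Oring v"
    by (auto intro!: Pideal_add Pideal_mult_Oring Oring_mult_Pideal[of e c'] Oring_mult_Pideal[of a])
  moreover have "mdet (mmul A B) \<in> Ounits v"
    using Gamma_lift_mdet[OF assms(1)] Gamma_lift_mdet[OF assms(2)] by (simp add: Ounits_mult)
  ultimately show ?thesis
    by (simp add: AB Gamma_lift_iff del: mdet_mmul)
qed

lemma Gamma_lift_diagonal_Ounits: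
  assumes "(a, b, c, e) \<in> Gamma_lift v D" "1 \<le> D"
  shows "a \<in> Ounits v" "e \<in> Ounits v"
proof -
  have h: "a \<in> Oring v" "b \<in> Oring v" "c \<in> Pideal v (int D)" "e \<in> Oring v" "a * e - b * c \<in> Ounits v"
    using assms by (auto simp: Gamma_lift_iff)
  have "b * c \<in> Pideal v 1"
    using h assms(2) by (auto intro: Oring_mult_Pideal Pideal_monoD)
  then have "(a * e - b * c) + b * c \<in> Ounits v"
    using Ounits_add_Pideal h by blast
  then have ae: "a * e \<in> Ounits v"
    by simp
  then have "a \<noteq> 0" "e \<noteq> 0"
    by (auto simp: Ounits_def)
  then have "v a + v e = 0" "0 \<le> v a" "0 \<le> v e"
    using ae h val_mult by (auto simp: Ounits_def Pideal_def)
  then show "a \<in> Ounits v" "e \<in> Ounits v"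
    using \<open>a \<noteq> 0\<close> \<open>e \<noteq> 0\<close> by (simp_all add: Ounits_def)
qed

lemma xtilde_cls:
  assumes "A \<in> Gamma_lift v D"
  shows "xtilde v x D (cls A) = x ((fst A)\<^sup>2 / mdet A)"
proof -
  define B where "B = (SOME B. B \<in> cls A \<and> B \<in> Gamma_lift v D)"
  have "B \<in> cls A \<and> B \<in> Gamma_lift v D"
    unfolding B_def by (rule someI[of _ A]) (simp add: self_in_cls assms)
  then obtain t where t: "t \<noteq> 0" "B = msc t A"
    by (auto simp: in_cls_iff)
  then have "fst B = t * fst A"
    by (cases A rule: prod_cases4) simp
  then have "(fst B)\<^sup>2 / mdet B = (fst A)\<^sup>2 / mdet A"
    using t by (simp add: power_mult_distrib)
  then show ?thesis
    unfolding xtilde_def Let_def B_def[symmetric] by simp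
qed

\<comment> \<open>Since (a - e)^2 differs from the discriminant by 4bc \<in> P^d, the diagonal entry e is an
  approximate root of the characteristic polynomial good enough for Hensel's lemma.\<close>
lemma Gamma_lift_charpoly_root:
  assumes N: "(a, b, c, e) \<in> Gamma_lift v d"
    and disc: "mdisc (a, b, c, e) \<noteq> 0" "v (mdisc (a, b, c, e)) < int d"
  shows "\<exists>r. r\<^sup>2 - (a + e) * r + (a * e - b * c) = 0"
proof -
  have bc: "b * c \<in> Pideal v (int d)"
    using N Oring_mult_Pideal by (simp add: Gamma_lift_iff)
  then have "- (4 * (b * c)) \<in> Pideal v (int d)"
    using Oring_mult_Pideal[of 4] by simp
  from val_add_eq_left[OF disc this]
  have "(a - e)\<^sup>2 \<noteq> 0 \<and> v ((a - e)\<^sup>2) = v (mdisc (a, b, c, e))"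
    by (simp add: mdisc_def power2_eq_square algebra_simps)
  then have "a - e \<noteq> 0" "v ((a - e)\<^sup>2) = v (mdisc (a, b, c, e))"
    by auto
  moreover define m where "m = v (2 * e - (a + e))"
  moreover have "2 * e - (a + e) = - (a - e)"
    by simp
  moreover note val_uminus[of "a - e"]
  ultimately have nz: "2 * e - (a + e) \<noteq> 0" and m: "2 * m < int d"
    using disc val_power2[of "a - e"] by auto
  have "e\<^sup>2 - (a + e) * e + (a * e - b * c) = - (b * c)"
    by (simp add: power2_eq_square algebra_simps)
  moreover have "- (b * c) \<in> Pideal v (2 * m + 1)"
    using bc m by (auto elim: Pideal_monoD)
  ultimately have "e\<^sup>2 - (a + e) * e + (a * e - b * c) \<in> Pideal v (2 * m + 1)"
    by (simp only:)
  then show ?thesis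
    using quadratic_Hensel[OF nz] by (simp add: m_def)
qed

lemma regular_elliptic_Gamma_level_bound:
  assumes h: "regular_elliptic h" and y: "y \<in> conj_class h" "N \<in> y" and N: "N \<in> Gamma_lift v d"
  shows "int d \<le> v (mdisc (rep h)) - v (mdet (rep h))"
proof (rule ccontr)
  assume small: "\<not> ?thesis"
  have hP: "h \<in> PGL2" and "mdisc (rep h) \<noteq> 0"
    using h by (auto simp: regular_elliptic_def mdisc_def)
  moreover obtain s where s: "s \<noteq> 0" "mtr N = s * mtr (rep h)" "mdet N = s\<^sup>2 * mdet (rep h)"
    using conj_class_charpoly_scaled[OF hP y] by blast
  moreover have "mdet (rep h) \<noteq> 0"
    using mdet_rep_nonzero hP by blast
  moreover have "v (mdet N) = 0"
    using Gamma_lift_mdet[OF N] by (simp add: Ounits_def)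
  moreover have "mdisc N = s\<^sup>2 * mdisc (rep h)"
    using s by (simp add: mdisc_def power_mult_distrib algebra_simps)
  ultimately have "mdisc N \<noteq> 0" "v (mdisc N) = v (mdisc (rep h)) - v (mdet (rep h))"
    by (simp_all add: val_mult val_power2)
  moreover obtain a b c e where Ne: "N = (a, b, c, e)"
    by (cases N rule: prod_cases4)
  ultimately obtain r where "r\<^sup>2 - mtr N * r + mdet N = 0"
    using Gamma_lift_charpoly_root[of a b c e d] N small by auto
  then show False
    using conj_class_charpoly_no_root[OF h y] by blast
qed

lemma regular_elliptic_class_Gamma_disjoint:
  assumes \<Omega>: "regular_elliptic_class \<Omega>" and D: "dclass v \<Omega> < D"
  shows "\<Omega> \<inter> Gamma v D = {}"
proof (rule ccontr)
  obtain h where h: "regular_elliptic h" and \<Omega>h: "\<Omega> = conj_class h"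
    using \<Omega> by (auto simp: regular_elliptic_class_def)
  define B where "B = nat (v (mdisc (rep h)) - v (mdet (rep h)))"
  have bounded: "d \<le> B" if "\<Omega> \<inter> Gamma v d \<noteq> {}" for d
    using that regular_elliptic_Gamma_level_bound[OF h] self_in_cls
    by (fastforce simp: \<Omega>h Gamma_def B_def)
  assume "\<Omega> \<inter> Gamma v D \<noteq> {}"
  then have "D \<le> dclass v \<Omega>"
    unfolding dclass_def using bounded by (rule Greatest_le_nat)
  then show False
    using D by simp
qed

lemma Gamma_lift_mmul_unit_diag:
  assumes "A \<in> Gamma_lift v D" "k \<in> Ounits v"
  shows "mmul A (k, 0, 0, 1) \<in> Gamma_lift v D"
  using Gamma_lift_mmul[OF assms(1), of "(k, 0, 0, 1)"] assms(2)
  by (simp add: Gamma_lift_iff Ounits_Oring)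

lemma Gamma_lift_mmul_Pideal_diag:
  assumes A: "A \<in> Gamma_lift v D" and D: "1 \<le> D" and k: "k \<in> Pideal v 1"
  shows "mtr (mmul A (k, 0, 0, 1)) \<in> Ounits v \<and> mdet (mmul A (k, 0, 0, 1)) \<in> Pideal v 1"
    and "mtr (mmul A (1, 0, 0, k)) \<in> Ounits v \<and> mdet (mmul A (1, 0, 0, k)) \<in> Pideal v 1"
proof -
  obtain a b c e where Ae: "A = (a, b, c, e)"
    by (cases A rule: prod_cases4)
  have u: "a \<in> Ounits v" "e \<in> Ounits v"
    using Gamma_lift_diagonal_Ounits A D by (simp_all add: Ae)
  have "mdet A * k \<in> Pideal v 1"
    using Oring_mult_Pideal[OF Ounits_Oring[OF Gamma_lift_mdet[OF A]] k] .
  moreover have "mdet (mmul A (k, 0, 0, 1)) = mdet A * k" "mdet (mmul A (1, 0, 0, k)) = mdet A * k"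
    by simp_all
  moreover have "e + a * k \<in> Ounits v" "a + e * k \<in> Ounits v"
    using Ounits_add_Pideal[OF u(2) Oring_mult_Pideal[OF Ounits_Oring[OF u(1)] k]]
      Ounits_add_Pideal[OF u(1) Oring_mult_Pideal[OF Ounits_Oring[OF u(2)] k]] .
  moreover have "mtr (mmul A (k, 0, 0, 1)) = e + a * k" "mtr (mmul A (1, 0, 0, k)) = a + e * k"
    by (simp_all add: Ae add.commute)
  ultimately show "mtr (mmul A (k, 0, 0, 1)) \<in> Ounits v \<and> mdet (mmul A (k, 0, 0, 1)) \<in> Pideal v 1"
    and "mtr (mmul A (1, 0, 0, k)) \<in> Ounits v \<and> mdet (mmul A (1, 0, 0, k)) \<in> Pideal v 1"
    by simp_all
qed

lemma conj_class_no_unit_trace_Pideal_det: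
  assumes "regular_elliptic h" "y \<in> conj_class h" "Z \<in> y"
    and "mtr Z \<in> Ounits v" "mdet Z \<in> Pideal v 1"
  shows False
  using quadratic_root_of_unit_trace[OF assms(4,5)] conj_class_charpoly_no_root[OF assms(1-3)]
  by blast

\<comment> \<open>Rescale so that one diagonal entry is integral: either the result lies in the level-D group, or
  its trace is a unit while its determinant is not, and then Hensel produces an eigenvalue.\<close>
lemma regular_elliptic_conj_class_not_Gamma_diag:
  assumes h: "regular_elliptic h" and disj: "conj_class h \<inter> Gamma v D = {}" and D: "1 \<le> D"
    and G: "G \<in> Gamma_lift v D" and a: "a \<noteq> 0" and e: "e \<noteq> 0"
  shows "cls (mmul G (a, 0, 0, e)) \<notin> conj_class h"
proof
  assume y: "cls (mmul G (a, 0, 0, e)) \<in> conj_class h"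
  define k where "k = a / e"
  have k: "k \<noteq> 0"
    using a e by (simp add: k_def)
  have N1: "mmul G (k, 0, 0, 1) \<in> cls (mmul G (a, 0, 0, e))"
    unfolding in_cls_iff using a e
    by (intro exI[of _ "1 / e"]) (cases G rule: prod_cases4, simp add: k_def)
  have N2: "mmul G (1, 0, 0, 1 / k) \<in> cls (mmul G (a, 0, 0, e))"
    unfolding in_cls_iff using a e
    by (intro exI[of _ "1 / a"]) (cases G rule: prod_cases4, simp add: k_def)
  consider "v k = 0" | "v k > 0" | "v k < 0"
    by linarith
  then show False
  proof cases
    case 1
    then have "mmul G (k, 0, 0, 1) \<in> Gamma_lift v D"
      using Gamma_lift_mmul_unit_diag[OF G] k by (simp add: Ounits_def)
    then have "cls (mmul G (k, 0, 0, 1)) \<in> Gamma v D"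
      unfolding Gamma_def by (rule imageI)
    then show False
      using cls_eqI[OF N1] disj y by auto
  next
    case 2
    then have "k \<in> Pideal v 1"
      by (simp add: Pideal_def)
    then show False
      using conj_class_no_unit_trace_Pideal_det[OF h y N1] Gamma_lift_mmul_Pideal_diag(1)[OF G D] by blast
  next
    case 3
    then have "1 / k \<in> Pideal v 1"
      using k val_inverse[of k] by (simp add: Pideal_def divide_inverse)
    then show False
      using conj_class_no_unit_trace_Pideal_det[OF h y N2] Gamma_lift_mmul_Pideal_diag(2)[OF G D] by blast
  qed
qed

end

section \<open>Densities equivariant under Gamma_D\<close>

\<comment> \<open>In the application D = d(x) and 1 + z is a unit in U_(D-1) on which x^2 is non-trivial;
  it exists by minimality of d(x).\<close>
locale Gamma_equivariant = local_field v for v :: "'f::field \<Rightarrow> int" +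
  fixes x :: "'f \<Rightarrow> complex" and \<phi> :: "'f mat2 set \<Rightarrow> complex" and D :: nat and z :: 'f
  assumes level_pos: "1 \<le> D"
    and x_mult: "\<And>a b. a \<in> Ounits v \<Longrightarrow> b \<in> Ounits v \<Longrightarrow> x (a * b) = x a * x b"
    and x_nonzero: "\<And>a. a \<in> Ounits v \<Longrightarrow> x a \<noteq> 0"
    and z_Pideal: "z \<in> Pideal v (int D - 1)"
    and one_plus_z_Ounits: "1 + z \<in> Ounits v"
    and x_one_plus_z: "(x (1 + z))\<^sup>2 \<noteq> 1"
    and phi_equivariant: "\<And>\<gamma> g. \<gamma> \<in> Gamma v D \<Longrightarrow> g \<in> PGL2 \<Longrightarrow>
       \<phi> (gmul \<gamma> g) = xtilde v x D \<gamma> * \<phi> g \<and> \<phi> (gmul g \<gamma>) = xtilde v x D \<gamma> * \<phi> g"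
begin

definition xtilde_mat :: "'f mat2 \<Rightarrow> complex" where
  "xtilde_mat A = x ((fst A)\<^sup>2 / mdet A)"

lemma x_one [simp]: "x 1 = 1"
  using x_mult[of 1 1] x_nonzero[of 1] by simp

lemma xtilde_mat_nonzero:
  assumes "A \<in> Gamma_lift v D"
  shows "xtilde_mat A \<noteq> 0"
proof -
  obtain a b c e where A: "A = (a, b, c, e)"
    by (cases A rule: prod_cases4)
  have "a \<in> Ounits v"
    using Gamma_lift_diagonal_Ounits(1) assms level_pos by (simp add: A)
  then have "a\<^sup>2 / mdet A \<in> Ounits v"
    using Gamma_lift_mdet[OF assms] by (simp add: power2_eq_square Ounits_divide Ounits_mult)
  then show ?thesis
    using x_nonzero by (simp add: xtilde_mat_def A)
qed

lemma phi_mmul_left: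
  "A \<in> Gamma_lift v D \<Longrightarrow> mdet Y \<noteq> 0 \<Longrightarrow> \<phi> (cls (mmul A Y)) = xtilde_mat A * \<phi> (cls Y)"
  using phi_equivariant[of "cls A" "cls Y"] cls_in_PGL2[of Y]
  by (simp add: Gamma_def gmul_cls xtilde_cls xtilde_mat_def)

lemma phi_mmul_right:
  "A \<in> Gamma_lift v D \<Longrightarrow> mdet Y \<noteq> 0 \<Longrightarrow> \<phi> (cls (mmul Y A)) = xtilde_mat A * \<phi> (cls Y)"
  using phi_equivariant[of "cls A" "cls Y"] cls_in_PGL2[of Y]
  by (simp add: Gamma_def gmul_cls xtilde_cls xtilde_mat_def)

lemma phi_zero_of_intertwining:
  assumes "mdet Y \<noteq> 0" "A \<in> Gamma_lift v D" "B \<in> Gamma_lift v D"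
    and "mmul Y A = mmul B Y" and "xtilde_mat A \<noteq> xtilde_mat B"
  shows "\<phi> (cls Y) = 0"
  using phi_mmul_left[OF assms(3,1)] phi_mmul_right[OF assms(2,1)] assms(4,5) by auto

lemma phi_zero_of_mmul_left:
  "A \<in> Gamma_lift v D \<Longrightarrow> mdet Y \<noteq> 0 \<Longrightarrow> \<phi> (cls (mmul A Y)) = 0 \<Longrightarrow> \<phi> (cls Y) = 0"
  using phi_mmul_left xtilde_mat_nonzero by simp

lemma phi_zero_of_mmul_right:
  "A \<in> Gamma_lift v D \<Longrightarrow> mdet Y \<noteq> 0 \<Longrightarrow> \<phi> (cls (mmul Y A)) = 0 \<Longrightarrow> \<phi> (cls Y) = 0"
  using phi_mmul_right xtilde_mat_nonzero by simp

lemma z_Oring: "z \<in> Oring v"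
  using Pideal_monoD[OF z_Pideal] level_pos by simp

lemma z_mult_Pideal1: "w \<in> Pideal v 1 \<Longrightarrow> z * w \<in> Pideal v (int D)"
  using Pideal_mult[OF z_Pideal] by fastforce

lemma z_mult_divide_swap:
  assumes "p \<noteq> 0" "q \<noteq> 0" "p / q \<notin> Pideal v (int D)"
  shows "z * (q / p) \<in> Oring v"
proof -
  have "q / p \<in> Pideal v (1 - int D)"
    using divide_in_Pideal_swap[OF assms] .
  then show ?thesis
    using Pideal_mult[OF z_Pideal] by fastforce
qed

lemma one_plus_z_Oring: "1 + z \<in> Oring v"
  using Pideal_add[OF one_in_Oring z_Oring] .

lemma one_minus_z_Oring: "1 - z \<in> Oring v"
  using Pideal_diff[OF one_in_Oring z_Oring] .

lemma one_plus_z_nonzero: "1 + z \<noteq> 0"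
  using one_plus_z_Ounits by (rule Ounits_nonzero)

lemma x_one_plus_z_ne_inverse: "x (1 + z) \<noteq> x (1 / (1 + z))"
proof
  assume eq: "x (1 + z) = x (1 / (1 + z))"
  have "1 / (1 + z) \<in> Ounits v"
    using Ounits_inverse[OF one_plus_z_Ounits] by (simp add: divide_inverse)
  then have "x (1 + z) * x (1 / (1 + z)) = x ((1 + z) * (1 / (1 + z)))"
    using x_mult one_plus_z_Ounits by metis
  also have "\<dots> = 1"
    using one_plus_z_nonzero by simp
  finally show False
    using eq x_one_plus_z by (simp add: power2_eq_square)
qed

lemma x_one_plus_z_square: "x ((1 + z) * (1 + z)) \<noteq> 1"
  using x_mult[OF one_plus_z_Ounits one_plus_z_Ounits] x_one_plus_z by (simp add: power2_eq_square)

lemma phi_vanishes_corner: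
  assumes "b \<noteq> 0" "c \<noteq> 0" "z * (e / b) \<in> Pideal v (int D)"
  shows "\<phi> (cls (0, b, c, e)) = 0"
proof (rule phi_zero_of_intertwining)
  show "mdet (0, b, c, e) \<noteq> 0"
    using assms by simp
  show "(1 + z, 0, 0, 1) \<in> Gamma_lift v D"
    using one_plus_z_Ounits by (simp add: Gamma_lift_iff one_plus_z_Oring)
  show "(1, 0, - (z * (e / b)), 1 + z) \<in> Gamma_lift v D"
    using one_plus_z_Ounits assms by (simp add: Gamma_lift_iff one_plus_z_Oring)
  show "mmul (0, b, c, e) (1 + z, 0, 0, 1) = mmul (1, 0, - (z * (e / b)), 1 + z) (0, b, c, e)"
    using assms by (simp add: field_simps)
  show "xtilde_mat (1 + z, 0, 0, 1) \<noteq> xtilde_mat (1, 0, - (z * (e / b)), 1 + z)"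
    using x_one_plus_z_ne_inverse one_plus_z_nonzero by (simp add: xtilde_mat_def power2_eq_square)
qed

lemma phi_vanishes_generic:
  assumes "a \<noteq> 0" "c \<noteq> 0" "a * e - b * c \<noteq> 0"
    and "z * ((a * e - b * c) / (a * c)) \<in> Oring v" "z * (a / c) \<in> Oring v"
    and "z * (c / a) \<in> Pideal v (int D)"
  shows "\<phi> (cls (a, b, c, e)) = 0"
proof (rule phi_zero_of_intertwining)
  define q where "q = - (z * ((a * e - b * c) / (a * c)))"
  have det: "(1 + z) * (1 - z) - - (z * (a / c)) * (z * (c / a)) = 1"
    using assms by (simp add: field_simps)
  show "mdet (a, b, c, e) \<noteq> 0"
    using assms by simp
  show "(1, q, 0, 1) \<in> Gamma_lift v D"
    using assms by (simp add: Gamma_lift_iff q_def)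
  show "(1 + z, - (z * (a / c)), z * (c / a), 1 - z) \<in> Gamma_lift v D"
    using assms unfolding Gamma_lift_iff det by (simp add: one_plus_z_Oring one_minus_z_Oring)
  show "mmul (a, b, c, e) (1, q, 0, 1) = mmul (1 + z, - (z * (a / c)), z * (c / a), 1 - z) (a, b, c, e)"
    using assms by (simp add: q_def field_simps)
  show "xtilde_mat (1, q, 0, 1) \<noteq> xtilde_mat (1 + z, - (z * (a / c)), z * (c / a), 1 - z)"
    using x_one_plus_z_square det by (simp add: xtilde_mat_def power2_eq_square)
qed

lemma phi_vanishes_upper_triangular:
  assumes "a \<noteq> 0" "b \<noteq> 0" "e \<noteq> 0" "z * (b / a) \<in> Oring v"
    and "z * (a / b) \<in> Pideal v (int D)" "z * (e / b) \<in> Pideal v (int D)"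
  shows "\<phi> (cls (a, b, 0, e)) = 0"
proof (rule phi_zero_of_intertwining)
  have det: "(1 + z) * (1 - z) - z * (b / a) * - (z * (a / b)) = 1"
    using assms by (simp add: field_simps)
  show "mdet (a, b, 0, e) \<noteq> 0"
    using assms by simp
  show "(1 + z, z * (b / a), - (z * (a / b)), 1 - z) \<in> Gamma_lift v D"
    using assms unfolding Gamma_lift_iff det by (simp add: one_plus_z_Oring one_minus_z_Oring)
  show "(1, 0, - (z * (e / b)), 1) \<in> Gamma_lift v D"
    using assms by (simp add: Gamma_lift_iff)
  show "mmul (a, b, 0, e) (1 + z, z * (b / a), - (z * (a / b)), 1 - z)
      = mmul (1, 0, - (z * (e / b)), 1) (a, b, 0, e)"
    using assms by (simp add: field_simps)
  show "xtilde_mat (1 + z, z * (b / a), - (z * (a / b)), 1 - z) \<noteq> xtilde_mat (1, 0, - (z * (e / b)), 1)"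
    using x_one_plus_z_square det by (simp add: xtilde_mat_def power2_eq_square)
qed

lemma phi_vanishes_lower_triangular:
  assumes "a \<noteq> 0" "c \<noteq> 0" "e \<noteq> 0" "z \<in> Pideal v 1"
    and "z * (e / c) \<in> Oring v" "z * (c / e) \<in> Pideal v (int D)" "z * (a / c) \<in> Oring v"
  shows "\<phi> (cls (a, 0, c, e)) = 0"
proof (rule phi_zero_of_intertwining)
  have mu: "1 - z \<in> Ounits v"
    using Ounits_add_Pideal[OF one_in_Ounits, of "- z"] assms by simp
  have inv: "1 / (1 + z) \<in> Ounits v" "1 / (1 - z) \<in> Ounits v"
    using Ounits_inverse[OF one_plus_z_Ounits] Ounits_inverse[OF mu] by (simp_all add: divide_inverse)
  have det: "1 * 1 - - (z * (e / c)) * - (z * (c / e)) = (1 + z) * (1 - z)"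
    using assms by (simp add: field_simps)
  show "mdet (a, 0, c, e) \<noteq> 0"
    using assms by simp
  show "(1, - (z * (e / c)), - (z * (c / e)), 1) \<in> Gamma_lift v D"
    using assms Ounits_mult[OF one_plus_z_Ounits mu] unfolding Gamma_lift_iff det by simp
  show "(1 + z, - (z * (a / c)), 0, 1 - z) \<in> Gamma_lift v D"
    using assms Ounits_mult[OF one_plus_z_Ounits mu] unfolding Gamma_lift_iff
    by (simp add: one_plus_z_Oring one_minus_z_Oring)
  show "mmul (a, 0, c, e) (1, - (z * (e / c)), - (z * (c / e)), 1)
      = mmul (1 + z, - (z * (a / c)), 0, 1 - z) (a, 0, c, e)"
    using assms by (simp add: field_simps)
  have "xtilde_mat (1, - (z * (e / c)), - (z * (c / e)), 1) = x (1 / (1 + z)) * x (1 / (1 - z))"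
    unfolding xtilde_mat_def using det x_mult[OF inv] by simp
  moreover have "xtilde_mat (1 + z, - (z * (a / c)), 0, 1 - z) = x (1 + z) * x (1 / (1 - z))"
    unfolding xtilde_mat_def using one_plus_z_nonzero x_mult[OF one_plus_z_Ounits inv(2)]
    by (simp add: power2_eq_square)
  moreover have "x (1 / (1 - z)) \<noteq> 0"
    using x_nonzero inv(2) by blast
  ultimately show "xtilde_mat (1, - (z * (e / c)), - (z * (c / e)), 1)
      \<noteq> xtilde_mat (1 + z, - (z * (a / c)), 0, 1 - z)"
    using x_one_plus_z_ne_inverse by simp
qed

section \<open>Support of an equivariant density\<close>

definition diag_double_coset :: "'f mat2 \<Rightarrow> bool" where
  "diag_double_coset Y \<longleftrightarrow> (\<exists>A B a e. A \<in> Gamma_lift v D \<and> B \<in> Gamma_lift v D \<and> a \<noteq> 0 \<and> e \<noteq> 0 \<and>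
      Y = mmul (mmul A (a, 0, 0, e)) B)"

definition zero_or_diag :: "'f mat2 \<Rightarrow> bool" where
  "zero_or_diag Y \<longleftrightarrow> \<phi> (cls Y) = 0 \<or> diag_double_coset Y"

lemma zero_or_diagI_double_coset:
  "A \<in> Gamma_lift v D \<Longrightarrow> B \<in> Gamma_lift v D \<Longrightarrow> a \<noteq> 0 \<Longrightarrow> e \<noteq> 0 \<Longrightarrow>
    Y = mmul (mmul A (a, 0, 0, e)) B \<Longrightarrow> zero_or_diag Y"
  unfolding zero_or_diag_def diag_double_coset_def by blast

lemma zero_or_diagI_zero: "\<phi> (cls Y) = 0 \<Longrightarrow> zero_or_diag Y"
  by (simp add: zero_or_diag_def)

lemma zero_or_diag_mmul_left:
  assumes "A \<in> Gamma_lift v D" "B \<in> Gamma_lift v D" "mmul B A = (1, 0, 0, 1)"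
    and "mdet Y \<noteq> 0" "zero_or_diag (mmul A Y)"
  shows "zero_or_diag Y"
proof -
  have "diag_double_coset Y" if dc: "diag_double_coset (mmul A Y)"
  proof -
    obtain A1 A2 a e where d: "A1 \<in> Gamma_lift v D" "A2 \<in> Gamma_lift v D" "a \<noteq> 0" "e \<noteq> 0"
      "mmul A Y = mmul (mmul A1 (a, 0, 0, e)) A2"
      using dc unfolding diag_double_coset_def by blast
    have "Y = mmul (mmul B A) Y"
      using assms by simp
    also have "\<dots> = mmul (mmul (mmul B A1) (a, 0, 0, e)) A2"
      by (simp add: mmul_assoc d(5))
    finally show ?thesis
      unfolding diag_double_coset_def using d Gamma_lift_mmul assms(2) by blast
  qed
  then show ?thesis
    using assms phi_zero_of_mmul_left unfolding zero_or_diag_def by blast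
qed

lemma zero_or_diag_mmul_right:
  assumes "A \<in> Gamma_lift v D" "B \<in> Gamma_lift v D" "mmul A B = (1, 0, 0, 1)"
    and "mdet Y \<noteq> 0" "zero_or_diag (mmul Y A)"
  shows "zero_or_diag Y"
proof -
  have "diag_double_coset Y" if dc: "diag_double_coset (mmul Y A)"
  proof -
    obtain A1 A2 a e where d: "A1 \<in> Gamma_lift v D" "A2 \<in> Gamma_lift v D" "a \<noteq> 0" "e \<noteq> 0"
      "mmul Y A = mmul (mmul A1 (a, 0, 0, e)) A2"
      using dc unfolding diag_double_coset_def by blast
    have "Y = mmul Y (mmul A B)"
      using assms by simp
    also have "\<dots> = mmul (mmul A1 (a, 0, 0, e)) (mmul A2 B)"
      by (simp add: mmul_assoc[symmetric] d(5))
    finally show ?thesis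
      unfolding diag_double_coset_def using d Gamma_lift_mmul assms(2) by blast
  qed
  then show ?thesis
    using assms phi_zero_of_mmul_right unfolding zero_or_diag_def by blast
qed

lemma phi_vanishes_lower_triangular_corner_dominant:
  assumes a: "a \<noteq> 0" and c: "c \<noteq> 0" and e: "e \<noteq> 0"
    and ac: "a / c \<in> Oring v" and ec: "e / c \<in> Oring v"
  shows "\<phi> (cls (a, 0, c, e)) = 0"
proof -
  define b' where "b' = - (a / c) * e"
  define Y1 where "Y1 = (0 :: 'f, b', c, e)"
  have b': "b' \<noteq> 0"
    using a c e by (simp add: b'_def)
  have "mmul Y1 (1, - (e / c), 0, 1) = (0, b', c, 0)"
    using c by (simp add: Y1_def)
  moreover have "\<phi> (cls (0, b', c, 0)) = 0"
    using phi_vanishes_corner[of b' c 0] b' c by simp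
  ultimately have "\<phi> (cls Y1) = 0"
    using phi_zero_of_mmul_right[OF upper_unipotent_in_Gamma_lift, of "- (e / c)" Y1] ec b' c
    by (simp add: Y1_def)
  moreover have "mmul (1, - (a / c), 0, 1) (a, 0, c, e) = Y1"
    using c by (simp add: Y1_def b'_def)
  ultimately show ?thesis
    using phi_zero_of_mmul_left[OF upper_unipotent_in_Gamma_lift, of "- (a / c)" "(a, 0, c, e)"]
      ac a e by simp
qed

lemma phi_vanishes_lower_triangular_off_level:
  assumes a: "a \<noteq> 0" and e: "e \<noteq> 0"
    and ca: "c / a \<notin> Pideal v (int D)" and ce: "c / e \<notin> Pideal v (int D)"
  shows "\<phi> (cls (a, 0, c, e)) = 0"
proof -
  have c: "c \<noteq> 0"
    using ca by auto
  have ac: "z * (a / c) \<in> Oring v" and ec: "z * (e / c) \<in> Oring v"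
    using z_mult_divide_swap[OF c] a e ca ce by blast+
  consider "c / a \<in> Pideal v 1" | "c / e \<in> Pideal v 1" | "c / a \<notin> Pideal v 1" "c / e \<notin> Pideal v 1"
    by blast
  then show ?thesis
  proof cases
    case 1
    then show ?thesis
      using phi_vanishes_generic[of a c e 0] a c e ac ec z_mult_Pideal1[OF 1] by simp
  next
    case 2
    then have "int D \<noteq> 1"
      using ce by auto
    then have "z \<in> Pideal v 1"
      using Pideal_monoD[OF z_Pideal] level_pos by simp
    then show ?thesis
      using phi_vanishes_lower_triangular[of a c e] a c e ac ec z_mult_Pideal1[OF 2] by simp
  next
    case 3
    then show ?thesis
      using phi_vanishes_lower_triangular_corner_dominant[OF a c e] divide_notin_Pideal1_swap[OF c] a e
      by blast
  qed
qed

lemma zero_or_diag_lower_triangular: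
  assumes a: "a \<noteq> 0" and e: "e \<noteq> 0"
  shows "zero_or_diag (a, 0, c, e)"
proof -
  consider "c / a \<in> Pideal v (int D)" | "c / e \<in> Pideal v (int D)"
    | "c / a \<notin> Pideal v (int D)" "c / e \<notin> Pideal v (int D)"
    by blast
  then show ?thesis
  proof cases
    case 1
    show ?thesis
      by (rule zero_or_diagI_double_coset[OF lower_unipotent_in_Gamma_lift[OF 1] id_in_Gamma_lift a e])
        (use a in simp)
  next
    case 2
    show ?thesis
      by (rule zero_or_diagI_double_coset[OF id_in_Gamma_lift lower_unipotent_in_Gamma_lift[OF 2] a e])
        (use e in simp)
  next
    case 3
    then show ?thesis
      using phi_vanishes_lower_triangular_off_level[OF a e] zero_or_diagI_zero by blast
  qed
qed

lemma zero_or_diag_upper_triangular: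
  assumes a: "a \<noteq> 0" and e: "e \<noteq> 0"
  shows "zero_or_diag (a, b, 0, e)"
proof -
  consider "b / a \<in> Oring v" | "b / e \<in> Oring v" | "b / a \<notin> Oring v" "b / e \<notin> Oring v"
    by blast
  then show ?thesis
  proof cases
    case 1
    show ?thesis
      by (rule zero_or_diagI_double_coset[OF id_in_Gamma_lift upper_unipotent_in_Gamma_lift[OF 1] a e])
        (use a in simp)
  next
    case 2
    show ?thesis
      by (rule zero_or_diagI_double_coset[OF upper_unipotent_in_Gamma_lift[OF 2] id_in_Gamma_lift a e])
        (use e in simp)
  next
    case 3
    then have b: "b \<noteq> 0"
      by auto
    have ab: "a / b \<in> Pideal v 1" and eb: "e / b \<in> Pideal v 1"
      using divide_notin_Oring_swap[OF b] a e 3 by blast+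
    show ?thesis
    proof (cases "a / b \<in> Pideal v (int D)")
      case False
      then have "z * (b / a) \<in> Oring v"
        using z_mult_divide_swap[OF a b] by blast
      then show ?thesis
        using phi_vanishes_upper_triangular[of a b e] a b e z_mult_Pideal1[OF ab] z_mult_Pideal1[OF eb]
        by (simp add: zero_or_diagI_zero)
    next
      case True
      have "mmul (a, b, 0, e) (1, 0, - (a / b), 1) = (0, b, - (e * (a / b)), e)"
        using b by simp
      moreover have "\<phi> (cls (0, b, - (e * (a / b)), e)) = 0"
        using phi_vanishes_corner a b e z_mult_Pideal1[OF eb] by simp
      ultimately show ?thesis
        using phi_zero_of_mmul_right[OF lower_unipotent_in_Gamma_lift, of "- (a / b)" "(a, b, 0, e)"]
          True a e by (simp add: zero_or_diagI_zero)
    qed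
  qed
qed

lemma zero_or_diag_of_upper_reducible:
  assumes det: "a * e - b * c \<noteq> 0"
    and red: "(a \<noteq> 0 \<and> b / a \<in> Oring v) \<or> (e \<noteq> 0 \<and> b / e \<in> Oring v)"
  shows "zero_or_diag (a, b, c, e)"
  using red
proof
  assume "a \<noteq> 0 \<and> b / a \<in> Oring v"
  then have a: "a \<noteq> 0" and ba: "b / a \<in> Oring v" "- (b / a) \<in> Oring v"
    by auto
  have "mmul (a, b, c, e) (1, - (b / a), 0, 1) = (a, 0, c, e - c * (b / a))"
    using a by simp
  moreover have "e - c * (b / a) \<noteq> 0"
    using a det by (auto simp: field_simps)
  ultimately have "zero_or_diag (mmul (a, b, c, e) (1, - (b / a), 0, 1))"
    using zero_or_diag_lower_triangular a by simp
  then show ?thesis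
    using zero_or_diag_mmul_right[OF upper_unipotent_in_Gamma_lift[OF ba(2)]
        upper_unipotent_in_Gamma_lift[OF ba(1)]] a det by simp
next
  assume "e \<noteq> 0 \<and> b / e \<in> Oring v"
  then have e: "e \<noteq> 0" and be: "b / e \<in> Oring v" "- (b / e) \<in> Oring v"
    by auto
  have "mmul (1, - (b / e), 0, 1) (a, b, c, e) = (a - (b / e) * c, 0, c, e)"
    using e by simp
  moreover have "a - (b / e) * c \<noteq> 0"
    using e det by (auto simp: field_simps)
  ultimately have "zero_or_diag (mmul (1, - (b / e), 0, 1) (a, b, c, e))"
    using zero_or_diag_lower_triangular e by simp
  then show ?thesis
    using zero_or_diag_mmul_left[OF upper_unipotent_in_Gamma_lift[OF be(2)]
        upper_unipotent_in_Gamma_lift[OF be(1)]] e det by simp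
qed

lemma zero_or_diag_of_lower_reducible:
  assumes det: "a * e - b * c \<noteq> 0"
    and red: "(a \<noteq> 0 \<and> c / a \<in> Pideal v (int D)) \<or> (e \<noteq> 0 \<and> c / e \<in> Pideal v (int D))"
  shows "zero_or_diag (a, b, c, e)"
  using red
proof
  assume "a \<noteq> 0 \<and> c / a \<in> Pideal v (int D)"
  then have a: "a \<noteq> 0" and ca: "c / a \<in> Pideal v (int D)" "- (c / a) \<in> Pideal v (int D)"
    by auto
  have "mmul (1, 0, - (c / a), 1) (a, b, c, e) = (a, b, 0, e - (c / a) * b)"
    using a by simp
  moreover have "e - (c / a) * b \<noteq> 0"
    using a det by (auto simp: field_simps)
  ultimately have "zero_or_diag (mmul (1, 0, - (c / a), 1) (a, b, c, e))"
    using zero_or_diag_upper_triangular a by simp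
  then show ?thesis
    using zero_or_diag_mmul_left[OF lower_unipotent_in_Gamma_lift[OF ca(2)]
        lower_unipotent_in_Gamma_lift[OF ca(1)]] a det by simp
next
  assume "e \<noteq> 0 \<and> c / e \<in> Pideal v (int D)"
  then have e: "e \<noteq> 0" and ce: "c / e \<in> Pideal v (int D)" "- (c / e) \<in> Pideal v (int D)"
    by auto
  have "mmul (a, b, c, e) (1, 0, - (c / e), 1) = (a - b * (c / e), b, 0, e)"
    using e by simp
  moreover have "a - b * (c / e) \<noteq> 0"
    using e det by (auto simp: field_simps)
  ultimately have "zero_or_diag (mmul (a, b, c, e) (1, 0, - (c / e), 1))"
    using zero_or_diag_upper_triangular e by simp
  then show ?thesis
    using zero_or_diag_mmul_right[OF lower_unipotent_in_Gamma_lift[OF ce(2)]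
        lower_unipotent_in_Gamma_lift[OF ce(1)]] e det by simp
qed

lemma phi_vanishes_c_over_a_in_P:
  assumes a: "a \<noteq> 0" and b: "b \<noteq> 0" and c: "c \<noteq> 0" and det: "a * e - b * c \<noteq> 0"
    and eb: "e / b \<in> Pideal v 1" and ca: "c / a \<in> Pideal v 1" "c / a \<notin> Pideal v (int D)"
    and ce: "\<not> (e \<noteq> 0 \<and> c / e \<in> Pideal v (int D))"
  shows "\<phi> (cls (a, b, c, e)) = 0"
proof (cases "a / b \<in> Pideal v (int D)")
  case True
  define c' where "c' = c - e * (a / b)"
  have "c' \<noteq> 0"
    using b det by (auto simp: c'_def field_simps)
  then have "\<phi> (cls (0, b, c', e)) = 0"
    using phi_vanishes_corner[of b c' e] b z_mult_Pideal1[OF eb] by simp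
  moreover have "mmul (a, b, c, e) (1, 0, - (a / b), 1) = (0, b, c', e)"
    using b by (simp add: c'_def)
  ultimately show ?thesis
    using phi_zero_of_mmul_right[OF lower_unipotent_in_Gamma_lift, of "- (a / b)" "(a, b, c, e)"]
      True det by simp
next
  case False
  have zba: "z * (b / a) \<in> Oring v"
    using z_mult_divide_swap[OF a b] False by blast
  have zec: "z * (e / c) \<in> Oring v"
    using z_mult_divide_swap[OF c, of e] ce by (cases "e = 0") auto
  have "z * ((a * e - b * c) / (a * c)) = z * (e / c) - z * (b / a)"
    using a c by (simp add: field_simps)
  then have "z * ((a * e - b * c) / (a * c)) \<in> Oring v"
    using Pideal_diff[OF zec zba] by simp
  moreover have "z * (a / c) \<in> Oring v"
    using z_mult_divide_swap[OF c a] ca(2) by blast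
  ultimately show ?thesis
    using phi_vanishes_generic[OF a c det] z_mult_Pideal1[OF ca(1)] by blast
qed

lemma phi_vanishes_of_lower_irreducible:
  assumes b: "b \<noteq> 0" and c: "c \<noteq> 0" and det: "a * e - b * c \<noteq> 0" and eb: "e / b \<in> Pideal v 1"
    and ca: "\<not> (a \<noteq> 0 \<and> c / a \<in> Pideal v (int D))" and ce: "\<not> (e \<noteq> 0 \<and> c / e \<in> Pideal v (int D))"
  shows "\<phi> (cls (a, b, c, e)) = 0"
proof -
  consider "a = 0" | "a \<noteq> 0" "c / a \<in> Pideal v 1" | "a \<noteq> 0" "c / a \<notin> Pideal v 1"
    by blast
  then show ?thesis
  proof cases
    case 1
    then show ?thesis
      using phi_vanishes_corner[of b c e] b c z_mult_Pideal1[OF eb] by simp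
  next
    case 2
    then show ?thesis
      using phi_vanishes_c_over_a_in_P[OF _ b c det eb] ca ce by blast
  next
    case 3
    have ac: "a / c \<in> Oring v"
      using divide_notin_Pideal1_swap[OF c] 3 by blast
    define w where "w = (a / c) * (e / b)"
    have wu: "1 - w \<in> Ounits v"
      using Ounits_add_Pideal[OF one_in_Ounits, of "- w"] Oring_mult_Pideal[OF ac eb]
      by (simp add: w_def)
    define b' where "b' = b - (a / c) * e"
    have bw: "b' = b * (1 - w)"
      using b by (simp add: b'_def w_def field_simps)
    have b': "b' \<noteq> 0"
      using bw b Ounits_nonzero[OF wu] by simp
    have "e / b' = (e / b) * inverse (1 - w)"
      using bw by (simp add: divide_inverse)
    then have "e / b' \<in> Pideal v 1"
      using Pideal_mult_Oring[OF eb Ounits_Oring[OF Ounits_inverse[OF wu]]] by simp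
    from z_mult_Pideal1[OF this] have "\<phi> (cls (0, b', c, e)) = 0"
      using phi_vanishes_corner[of b' c e] b' c by simp
    moreover have "mmul (1, - (a / c), 0, 1) (a, b, c, e) = (0, b', c, e)"
      using c by (simp add: b'_def)
    ultimately show ?thesis
      using phi_zero_of_mmul_left[OF upper_unipotent_in_Gamma_lift, of "- (a / c)" "(a, b, c, e)"]
        ac det by simp
  qed
qed

lemma zero_or_diag_all:
  assumes "mdet Y \<noteq> 0"
  shows "zero_or_diag Y"
proof -
  obtain a b c e where Y: "Y = (a, b, c, e)"
    by (cases Y rule: prod_cases4)
  then have det: "a * e - b * c \<noteq> 0"
    using assms by simp
  consider "b = 0" | "c = 0" | "(a \<noteq> 0 \<and> b / a \<in> Oring v) \<or> (e \<noteq> 0 \<and> b / e \<in> Oring v)"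
    | "(a \<noteq> 0 \<and> c / a \<in> Pideal v (int D)) \<or> (e \<noteq> 0 \<and> c / e \<in> Pideal v (int D))"
    | "b \<noteq> 0" "c \<noteq> 0" "\<not> (e \<noteq> 0 \<and> b / e \<in> Oring v)"
      "\<not> (a \<noteq> 0 \<and> c / a \<in> Pideal v (int D))" "\<not> (e \<noteq> 0 \<and> c / e \<in> Pideal v (int D))"
    by blast
  then show ?thesis
  proof cases
    case 1
    then show ?thesis
      using zero_or_diag_lower_triangular det by (simp add: Y)
  next
    case 2
    then show ?thesis
      using zero_or_diag_upper_triangular det by (simp add: Y)
  next
    case 3
    then show ?thesis
      using zero_or_diag_of_upper_reducible[OF det] by (simp add: Y)
  next
    case 4
    then show ?thesis
      using zero_or_diag_of_lower_reducible[OF det] by (simp add: Y)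
  next
    case 5
    have "e / b \<in> Pideal v 1"
      using divide_notin_Oring_swap[OF 5(1), of e] 5(3) by (cases "e = 0") auto
    then show ?thesis
      using phi_vanishes_of_lower_irreducible[OF 5(1,2) det] 5(4,5) by (simp add: Y zero_or_diagI_zero)
  qed
qed

lemma phi_vanishes_on_elliptic_class:
  assumes \<Omega>: "regular_elliptic_class \<Omega>" and disj: "\<Omega> \<inter> Gamma v D = {}" and y: "y \<in> \<Omega>"
  shows "\<phi> y = 0"
proof (rule ccontr)
  assume nz: "\<phi> y \<noteq> 0"
  obtain h where h: "regular_elliptic h" and \<Omega>h: "\<Omega> = conj_class h"
    using \<Omega> by (auto simp: regular_elliptic_class_def)
  have hP: "h \<in> PGL2"
    using h by (simp add: regular_elliptic_def)
  then have yP: "y \<in> PGL2"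
    using conj_class_subset_PGL2 y \<Omega>h by blast
  define Y where "Y = rep y"
  have dY: "mdet Y \<noteq> 0" and cY: "cls Y = y"
    using mdet_rep_nonzero cls_rep yP by (simp_all add: Y_def)
  have "diag_double_coset Y"
    using zero_or_diag_all[OF dY] nz cY by (auto simp: zero_or_diag_def)
  then obtain A B a e where d: "A \<in> Gamma_lift v D" "B \<in> Gamma_lift v D" "a \<noteq> 0" "e \<noteq> 0"
    and Yd: "Y = mmul (mmul A (a, 0, 0, e)) B"
    unfolding diag_double_coset_def by blast
  have "mmul (mmul B Y) (madj B) = mmul (mmul B A) (mmul (a, 0, 0, e) (mmul B (madj B)))"
    by (simp only: Yd mmul_assoc)
  also have "\<dots> = msc (mdet B) (mmul (mmul B A) (a, 0, 0, e))"
    by (simp only: mmul_madj mmul_msc_right mmul_id_right)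
  finally have "gconj (cls B) y = cls (mmul (mmul B A) (a, 0, 0, e))"
    using cY gconj_cls[of B Y] cls_msc Gamma_lift_mdet_nonzero[OF d(2)] by metis
  moreover have "gconj (cls B) y \<in> conj_class h"
    using gconj_in_conj_class[OF hP] y \<Omega>h cls_in_PGL2 Gamma_lift_mdet_nonzero[OF d(2)] by blast
  ultimately show False
    using regular_elliptic_conj_class_not_Gamma_diag[OF h _ level_pos Gamma_lift_mmul[OF d(2,1)] d(3,4)]
      disj \<Omega>h by simp
qed

end

lemma dchar_witness:
  assumes "0 < dchar v x"
  obtains u where "u \<in> Ugrp v (dchar v x - 1)" "(x u)\<^sup>2 \<noteq> 1"
proof -
  have "dchar v x - 1 < (LEAST r. \<forall>u\<in>Ugrp v r. (x u)\<^sup>2 = 1)"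
    using assms by (simp add: dchar_def)
  then have "\<not> (\<forall>u\<in>Ugrp v (dchar v x - 1). (x u)\<^sup>2 = 1)"
    by (rule not_less_Least)
  then show ?thesis
    using that by blast
qed

lemma (in local_field) Gamma_equivariant_of_Hprime:
  assumes x: "smooth_char v x" and \<phi>: "\<phi> \<in> Hprime v x" and D: "0 < dchar v x"
  shows "\<exists>z. Gamma_equivariant v x \<phi> (dchar v x) z"
proof -
  obtain u where u: "u \<in> Ugrp v (dchar v x - 1)" "(x u)\<^sup>2 \<noteq> 1"
    using dchar_witness[OF D] by blast
  have "u - 1 \<in> Pideal v (int (dchar v x) - 1)"
    using u D by (simp add: Ugrp_def of_nat_diff)
  with u x \<phi> D have "Gamma_equivariant v x \<phi> (dchar v x) (u - 1)"
    by unfold_locales (auto simp: smooth_char_def Hprime_def Ugrp_def)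
  then show ?thesis
    by blast
qed

lemma orbital_integral_eq_0:
  assumes "space M = PGL2" and "\<And>g. g \<in> PGL2 \<Longrightarrow> \<phi> (gconj g h) = 0"
  shows "orbital_integral M h \<phi> = 0"
proof -
  have "orbital_integral M h \<phi> = integral\<^sup>L M (\<lambda>g. 0)"
    unfolding orbital_integral_def using assms by (intro Bochner_Integration.integral_cong) auto
  then show ?thesis
    by simp
qed

theorem corollary7p3:
  fixes v :: "'f::field \<Rightarrow> int"
    and M :: "'f mat2 set measure"
    and x :: "'f \<Rightarrow> complex"
    and \<Omega> :: "'f mat2 set set"
    and \<phi> :: "'f mat2 set \<Rightarrow> complex"
  assumes "nonarch_local_field v"
    and "haar_measure v M"
    and "regular_elliptic_class \<Omega>"
    and "smooth_char v x"
    and "dchar v x > dclass v \<Omega>"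
    and "\<phi> \<in> Hprime v x"
  shows "\<forall>h\<in>\<Omega>. orbital_integral M h \<phi> = 0"
proof
  fix h
  assume h: "h \<in> \<Omega>"
  interpret local_field v
    by (rule local_field.intro) (fact assms(1))
  obtain z where "Gamma_equivariant v x \<phi> (dchar v x) z"
    using Gamma_equivariant_of_Hprime assms(4-6) by fastforce
  then interpret Gamma_equivariant v x \<phi> "dchar v x" z .
  have disj: "\<Omega> \<inter> Gamma v (dchar v x) = {}"
    using regular_elliptic_class_Gamma_disjoint assms(3,5) .
  show "orbital_integral M h \<phi> = 0"
  proof (rule orbital_integral_eq_0)
    show "space M = PGL2"
      using assms(2) by (simp add: haar_measure_def)
    show "\<phi> (gconj g h) = 0" if "g \<in> PGL2" for g
      using phi_vanishes_on_elliptic_class[OF assms(3) disj] regular_elliptic_class_gconj[OF assms(3) h that] .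
  qed
qed

end
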